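(* For every $\ell\ge 3$ there exists an $\ell$-core whose classes have total size at most $2\ell+1$, each class having size at most $3$ (and at least $1$). More precisely, there exist $\ell$-cores of the following types: $(1,2,\dots,2,1)$ if $\ell\equiv 1\pmod 4$; $(2,\dots,2,1)$ if $\ell\equiv 0\pmod 4$; $(2,\dots,2)$ if $\ell\equiv 3\pmod 4$; $(2,2,3,2,\dots,2)$ if $\ell\equiv 2\pmod 4$.
   Context: For $p\ge 3$, a $p$-core of type $(x_1,\dots,x_p)$ consists of pairwise disjoint finite sets $C_1,\dots,C_p$ (the classes) with $|C_i|=x_i$, together with sets $B_1,\dots,B_p\subseteq C_1\cup\dots\cup C_p$ such that $B_1\cup\dots\cup B_p=C_1\cup\dots\cup C_p$, and: (i) $B_i\cap C_i=\emptyset$ and $|B_i\cap C_j|=1$ for all $j\ne i$ (so $|B_i|=p-1$); (ii) $|B_i\cap B_j|+p$ is odd for all $1\le i,j\le p$. *)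

theory Defs
  imports Main
begin

text \<open>A p-core of type x (classes and sets indexed by 1..p, elements are natural numbers).
  C i is the i-th class, B i the i-th set.\<close>
definition is_core :: "nat \<Rightarrow> (nat \<Rightarrow> nat) \<Rightarrow> (nat \<Rightarrow> nat set) \<Rightarrow> (nat \<Rightarrow> nat set) \<Rightarrow> bool" where
  "is_core p x C B \<longleftrightarrow>
     p \<ge> 3 \<and>
     (\<forall>i\<in>{1..p}. finite (C i) \<and> card (C i) = x i) \<and>
     (\<forall>i\<in>{1..p}. \<forall>j\<in>{1..p}. i \<noteq> j \<longrightarrow> C i \<inter> C j = {}) \<and>
     (\<forall>i\<in>{1..p}. B i \<subseteq> (\<Union>j\<in>{1..p}. C j)) \<and>
     (\<Union>i\<in>{1..p}. B i) = (\<Union>j\<in>{1..p}. C j) \<and>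
     (\<forall>i\<in>{1..p}. B i \<inter> C i = {} \<and> (\<forall>j\<in>{1..p}. j \<noteq> i \<longrightarrow> card (B i \<inter> C j) = 1)) \<and>
     (\<forall>i\<in>{1..p}. \<forall>j\<in>{1..p}. odd (card (B i \<inter> B j) + p))"

end

theory Submission
  imports Defs "HOL-Library.Nat_Bijection"
begin

text \<open>
  Label the elements of class \<open>k\<close> by \<open>0, \<dots>, x k - 1\<close>. A core is then the same as a
  selector \<open>f\<close>, where \<open>f i k\<close> (for \<open>k \<noteq> i\<close>) is the label of the element of class \<open>k\<close>
  lying in \<open>B i\<close>: condition (i) holds automatically, covering says that every label is used,
  and \<open>B i \<inter> B j\<close> corresponds to the classes \<open>k \<notin> {i, j}\<close> with \<open>f i k = f j k\<close>.
  For labels at most 2 we have \<open>[a = b] \<equiv> 1 + a + b (mod 2)\<close> except when \<open>{a, b} = {0, 2}\<close>,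
  so for \<open>i \<noteq> j\<close> condition (ii) becomes the \<open>p\<close>-free statement that the two row sums of
  \<open>f\<close>, the two entries \<open>f i j\<close>, \<open>f j i\<close> and the number of \<open>{0, 2}\<close>-clashes add up to an
  odd number. For each residue of \<open>p\<close> modulo 4 there is an explicit selector of the
  required type whose row sums have known parity.
\<close>

definition selector_class :: "(nat \<Rightarrow> nat) \<Rightarrow> nat \<Rightarrow> nat set" where
  "selector_class x k = (\<lambda>v. prod_encode (k, v)) ` {..<x k}"

definition selector_block :: "nat \<Rightarrow> (nat \<Rightarrow> nat \<Rightarrow> nat) \<Rightarrow> nat \<Rightarrow> nat set" where
  "selector_block p f i = (\<lambda>k. prod_encode (k, f i k)) ` ({1..p} - {i})"

definition agreements :: "nat \<Rightarrow> (nat \<Rightarrow> nat \<Rightarrow> nat) \<Rightarrow> nat \<Rightarrow> nat \<Rightarrow> nat set" where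
  "agreements p f i j = {k \<in> {1..p} - {i, j}. f i k = f j k}"

lemma finite_selector_class: "finite (selector_class x k)"
  unfolding selector_class_def by simp

lemma card_selector_class: "card (selector_class x k) = x k"
  unfolding selector_class_def by (simp add: card_image inj_on_def)

lemma card_prod_encode_graph:
  "card ((\<lambda>k. prod_encode (k, g k)) ` A) = card A"
  by (simp add: card_image inj_on_def)

lemma selector_block_Int:
  assumes "i \<noteq> j"
  shows "selector_block p f i \<inter> selector_block p f j
         = (\<lambda>k. prod_encode (k, f i k)) ` agreements p f i j"
  using assms unfolding selector_block_def agreements_def by force

lemma selector_block_Int_class:
  assumes "k \<in> {1..p}" "k \<noteq> i" "f i k < x k"
  shows "selector_block p f i \<inter> selector_class x k = {prod_encode (k, f i k)}"
  using assms unfolding selector_block_def selector_class_def by auto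

lemma is_core_selector:
  assumes "p \<ge> 3"
    and range: "\<And>i k. i \<in> {1..p} \<Longrightarrow> k \<in> {1..p} \<Longrightarrow> k \<noteq> i \<Longrightarrow> f i k < x k"
    and cover: "\<And>k v. k \<in> {1..p} \<Longrightarrow> v < x k \<Longrightarrow> \<exists>i\<in>{1..p}. i \<noteq> k \<and> f i k = v"
    and parity: "\<And>i j. i \<in> {1..p} \<Longrightarrow> j \<in> {1..p} \<Longrightarrow> i \<noteq> j \<Longrightarrow> odd (card (agreements p f i j) + p)"
  shows "is_core p x (selector_class x) (selector_block p f)"
proof -
  have blocks_in: "selector_block p f i \<subseteq> (\<Union>k\<in>{1..p}. selector_class x k)" if "i \<in> {1..p}" for i
    using range[OF that] unfolding selector_block_def selector_class_def by fastforce
  have classes_in: "selector_class x k \<subseteq> (\<Union>i\<in>{1..p}. selector_block p f i)" if "k \<in> {1..p}" for k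
    using cover[OF that] that unfolding selector_block_def selector_class_def by fastforce
  have card_block: "card (selector_block p f i) = p - 1" if "i \<in> {1..p}" for i
    using that by (simp add: selector_block_def card_prod_encode_graph)
  have block_parity: "odd (card (selector_block p f i \<inter> selector_block p f j) + p)"
    if "i \<in> {1..p}" "j \<in> {1..p}" for i j
  proof (cases "i = j")
    case True
    then show ?thesis using card_block[OF that(1)] \<open>p \<ge> 3\<close> by simp
  next
    case False
    then show ?thesis using parity[OF that False]
      by (simp add: selector_block_Int card_prod_encode_graph)
  qed
  have classes_disjoint: "selector_class x k \<inter> selector_class x l = {}" if "k \<noteq> l" for k l
    using that unfolding selector_class_def by auto
  have block_avoids_class: "selector_block p f i \<inter> selector_class x i = {}" for i
    unfolding selector_block_def selector_class_def by auto
  have "(\<Union>i\<in>{1..p}. selector_block p f i) = (\<Union>k\<in>{1..p}. selector_class x k)"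
    using blocks_in classes_in by (intro equalityI) blast+
  then show ?thesis
    unfolding is_core_def
    using \<open>p \<ge> 3\<close> blocks_in block_parity range classes_disjoint block_avoids_class
    by (simp add: finite_selector_class card_selector_class selector_block_Int_class)
qed

definition row_sum :: "nat \<Rightarrow> (nat \<Rightarrow> nat \<Rightarrow> nat) \<Rightarrow> nat \<Rightarrow> nat" where
  "row_sum p f i = (\<Sum>k\<in>{1..p} - {i}. f i k)"

definition clashes :: "nat \<Rightarrow> (nat \<Rightarrow> nat \<Rightarrow> nat) \<Rightarrow> nat \<Rightarrow> nat \<Rightarrow> nat" where
  "clashes p f i j = card {k \<in> {1..p} - {i, j}. {f i k, f j k} = {0, 2}}"

lemma odd_agree_indicator:
  fixes a b :: nat
  assumes "a \<le> 2" "b \<le> 2"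
  shows "odd (of_bool (a = b) + a + b + of_bool ({a, b} = {0, 2}))"
proof -
  have "a \<in> {0, 1, 2}" "b \<in> {0, 1, 2}" using assms by auto
  then show ?thesis by (auto simp: doubleton_eq_iff)
qed

lemma even_card_agree_iff:
  fixes a b :: "nat \<Rightarrow> nat"
  assumes "finite S" "\<And>k. k \<in> S \<Longrightarrow> a k \<le> 2" "\<And>k. k \<in> S \<Longrightarrow> b k \<le> 2"
  shows "even (card {k \<in> S. a k = b k} + card S)
     \<longleftrightarrow> even (sum a S + sum b S + card {k \<in> S. {a k, b k} = {0, 2}})"
  using assms
proof (induction S rule: finite_induct)
  case empty
  then show ?case by simp
next
  case (insert s S)
  have card_insert: "card {k \<in> insert s S. P k} = of_bool (P s) + card {k \<in> S. P k}" for P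
  proof -
    have "{k \<in> insert s S. P k} = (if P s then insert s {k \<in> S. P k} else {k \<in> S. P k})"
      by auto
    then show ?thesis using insert.hyps by simp
  qed
  have "even (card {k \<in> S. a k = b k} + card S)
     \<longleftrightarrow> even (sum a S + sum b S + card {k \<in> S. {a k, b k} = {0, 2}})"
    using insert by simp
  moreover have "odd (of_bool (a s = b s) + a s + b s + of_bool ({a s, b s} = {0, 2}))"
    using insert.prems by (intro odd_agree_indicator) auto
  moreover have "even (u + c + Suc n) \<longleftrightarrow> even (x + A + (y + B) + (v + d))"
    if "even (c + n) \<longleftrightarrow> even (A + B + d)" "odd (u + x + y + v)" for u c n x A y B v d :: nat
    using that by presburger
  ultimately show ?case
    unfolding card_insert sum.insert[OF insert.hyps] card_insert_disjoint[OF insert.hyps]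
    by blast
qed

lemma row_sum_add_diag:
  assumes "i \<in> {1..p}"
  shows "row_sum p f i + f i i = (\<Sum>k=1..p. f i k)"
  using assms by (simp add: row_sum_def sum.remove)

lemma odd_card_agreements_iff:
  assumes i: "i \<in> {1..p}" and j: "j \<in> {1..p}" and "i \<noteq> j"
    and bound: "\<And>l k. l \<in> {i, j} \<Longrightarrow> k \<in> {1..p} - {l} \<Longrightarrow> f l k \<le> 2"
  shows "odd (card (agreements p f i j) + p)
     \<longleftrightarrow> odd (row_sum p f i + f i j + row_sum p f j + f j i + clashes p f i j)"
proof -
  define S where "S = {1..p} - {i, j}"
  have card_S: "card S + 2 = p"
    using i j \<open>i \<noteq> j\<close> by (simp add: S_def card_Diff_subset) linarith
  have row: "row_sum p f l = sum (f l) S + f l m" if "{l, m} = {i, j}" for l m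
  proof -
    have "{1..p} - {l} = insert m S" "m \<notin> S"
      using that i j \<open>i \<noteq> j\<close> by (auto simp: S_def doubleton_eq_iff)
    then show ?thesis by (simp add: row_sum_def S_def add.commute)
  qed
  have "even (card (agreements p f i j) + card S)
     \<longleftrightarrow> even (sum (f i) S + sum (f j) S + clashes p f i j)"
    unfolding agreements_def clashes_def S_def[symmetric]
    using bound by (intro even_card_agree_iff) (auto simp: S_def)
  moreover have "odd (card (agreements p f i j) + p) \<longleftrightarrow> odd (card (agreements p f i j) + card S)"
    using card_S by presburger
  moreover have "row_sum p f i + f i j + row_sum p f j + f j i
      = sum (f i) S + sum (f j) S + 2 * (f i j + f j i)"
    using row[of i j] row[of j i] by (simp add: insert_commute)
  ultimately show ?thesis
    by presburger
qed

lemma is_core_selector_parity: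
  assumes "p \<ge> 3"
    and range: "\<And>i k. i \<in> {1..p} \<Longrightarrow> k \<in> {1..p} \<Longrightarrow> k \<noteq> i \<Longrightarrow> f i k < x k"
    and small: "\<And>k. k \<in> {1..p} \<Longrightarrow> x k \<le> 3"
    and cover: "\<And>k v. k \<in> {1..p} \<Longrightarrow> v < x k \<Longrightarrow> \<exists>i\<in>{1..p}. i \<noteq> k \<and> f i k = v"
    and parity: "\<And>i j. 1 \<le> i \<Longrightarrow> i < j \<Longrightarrow> j \<le> p \<Longrightarrow>
      odd (row_sum p f i + f i j + row_sum p f j + f j i + clashes p f i j)"
  shows "is_core p x (selector_class x) (selector_block p f)"
proof (rule is_core_selector[OF \<open>p \<ge> 3\<close> range cover])
  fix i j assume i: "i \<in> {1..p}" and j: "j \<in> {1..p}" and "i \<noteq> j"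
  have bound: "f l k \<le> 2" if "l \<in> {i, j}" "k \<in> {1..p} - {l}" for l k
    using range[of l k] small[of k] that i j by fastforce
  have "clashes p f j i = clashes p f i j"
    by (simp add: clashes_def insert_commute)
  then have "odd (row_sum p f i + f i j + row_sum p f j + f j i + clashes p f i j)"
    using parity[of i j] parity[of j i] i j \<open>i \<noteq> j\<close>
    by (cases "i < j") (auto simp: ac_simps)
  then show "odd (card (agreements p f i j) + p)"
    using odd_card_agreements_iff[OF i j \<open>i \<noteq> j\<close>, where f = f] bound by blast
qed

lemma is_core_selector_binary:
  assumes "p \<ge> 3"
    and range: "\<And>i k. i \<in> {1..p} \<Longrightarrow> k \<in> {1..p} \<Longrightarrow> k \<noteq> i \<Longrightarrow> f i k < x k"
    and small: "\<And>k. k \<in> {1..p} \<Longrightarrow> x k \<le> 2"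
    and cover: "\<And>k v. k \<in> {1..p} \<Longrightarrow> v < x k \<Longrightarrow> \<exists>i\<in>{1..p}. i \<noteq> k \<and> f i k = v"
    and parity: "\<And>i j. 1 \<le> i \<Longrightarrow> i < j \<Longrightarrow> j \<le> p \<Longrightarrow>
      odd (row_sum p f i + f i j + row_sum p f j + f j i)"
  shows "is_core p x (selector_class x) (selector_block p f)"
proof (rule is_core_selector_parity[OF \<open>p \<ge> 3\<close> range _ cover])
  show "x k \<le> 3" if "k \<in> {1..p}" for k
    using small[OF that] by simp
  fix i j assume "1 \<le> i" "i < j" "j \<le> p"
  moreover have "f l k < 2" if "l \<in> {i, j}" "k \<in> {1..p} - {i, j}" for l k
    using range[of l k] small[of k] that \<open>1 \<le> i\<close> \<open>i < j\<close> \<open>j \<le> p\<close> by fastforce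
  then have "clashes p f i j = 0"
    by (fastforce simp: clashes_def doubleton_eq_iff)
  ultimately show "odd (row_sum p f i + f i j + row_sum p f j + f j i + clashes p f i j)"
    using parity by simp
qed

lemma even_sum_mod_2: "even (\<Sum>k\<in>A. g k mod 2) \<longleftrightarrow> even (\<Sum>k\<in>A. g k :: nat)"
  by (metis even_iff_mod_2_eq_zero mod_sum_eq)

lemma even_row_sum_iff:
  "i \<in> {1..p} \<Longrightarrow> even (row_sum p f i) \<longleftrightarrow> (even (\<Sum>k=1..p. f i k) \<longleftrightarrow> even (f i i))"
  by (metis even_add row_sum_add_diag)

definition selector_odd :: "nat \<Rightarrow> nat \<Rightarrow> nat" where
  "selector_odd i k = (if odd i then of_bool (i < k) else of_bool (k < i))"

lemma row_sum_selector_odd: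
  assumes "i \<in> {1..p}"
  shows "row_sum p selector_odd i = (if odd i then p - i else i - 1)"
proof (cases "odd i")
  case True
  have "({1..p} - {i}) \<inter> {k. i < k} = {i<..p}" using assms by auto
  then show ?thesis using True by (simp add: row_sum_def selector_odd_def)
next
  case False
  have "({1..p} - {i}) \<inter> {k. k < i} = {1..<i}" using assms by auto
  then show ?thesis using False by (simp add: row_sum_def selector_odd_def)
qed

lemma is_core_selector_odd:
  assumes "p \<ge> 3" "odd p"
  shows "is_core p (\<lambda>_. 2) (selector_class (\<lambda>_. 2)) (selector_block p selector_odd)"
proof (rule is_core_selector_binary[OF \<open>p \<ge> 3\<close>])
  show "selector_odd i k < 2" for i k
    by (simp add: selector_odd_def)
  show "\<exists>i\<in>{1..p}. i \<noteq> k \<and> selector_odd i k = v" if "k \<in> {1..p}" "v < 2" for k v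
  proof -
    define i :: nat where "i = (if v = 1 then if k = 1 then 2 else 1 else if k \<le> 2 then 3 else 2)"
    have "i \<in> {1..p}" "i \<noteq> k" "selector_odd i k = v"
      using that \<open>p \<ge> 3\<close> by (auto simp: i_def selector_odd_def)
    then show ?thesis by blast
  qed
  show "odd (row_sum p selector_odd i + selector_odd i j + row_sum p selector_odd j + selector_odd j i)"
    if "1 \<le> i" "i < j" "j \<le> p" for i j
    using that \<open>odd p\<close> by (auto simp: row_sum_selector_odd selector_odd_def)
qed simp

lemma even_sum_Icc_iff: "even (\<Sum>{1..n::nat}) \<longleftrightarrow> n mod 4 = 0 \<or> n mod 4 = 3"
proof (induction n)
  case (Suc n)
  then show ?case by simp presburger
qed simp

definition selector_0_mod_4 :: "nat \<Rightarrow> nat \<Rightarrow> nat \<Rightarrow> nat" where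
  "selector_0_mod_4 p i k = (if k = p then 0 else (of_bool (k < i) + i * k) mod 2)"

lemma odd_row_sum_selector_0_mod_4:
  assumes "p mod 4 = 0" "i \<in> {1..p}"
  shows "odd (row_sum p (selector_0_mod_4 p) i)"
proof -
  have "even p" using assms(1) by presburger
  have Icc: "{1..p} = insert p {1..<p}" using assms by auto
  have "\<Sum>{1..p} = p + \<Sum>{1..<p}"
    unfolding Icc by simp
  then have "even (\<Sum>{1..<p})"
    using even_sum_Icc_iff[of p] assms(1) \<open>even p\<close> by simp
  moreover have "(\<Sum>k\<in>{1..<p}. of_bool (k < i) + i * k) = (i - 1) + i * \<Sum>{1..<p}"
  proof -
    have "{1..<p} \<inter> {k. k < i} = {1..<i}" using assms by auto
    then show ?thesis by (simp add: sum.distrib sum_distrib_left)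
  qed
  moreover have "(\<Sum>k=1..p. selector_0_mod_4 p i k) = (\<Sum>k\<in>{1..<p}. (of_bool (k < i) + i * k) mod 2)"
    unfolding Icc by (simp add: selector_0_mod_4_def)
  ultimately have "even (\<Sum>k=1..p. selector_0_mod_4 p i k) \<longleftrightarrow> odd i"
    using assms even_sum_mod_2[of "\<lambda>k. of_bool (k < i) + i * k" "{1..<p}"]
    by (cases i) auto
  moreover have "even (selector_0_mod_4 p i i) \<longleftrightarrow> even i"
    using \<open>even p\<close> by (simp add: selector_0_mod_4_def)
  ultimately show ?thesis
    using assms by (simp add: even_row_sum_iff)
qed

lemma is_core_selector_0_mod_4:
  assumes "p \<ge> 3" "p mod 4 = 0"
  shows "is_core p (\<lambda>i. if i = p then 1 else 2)
           (selector_class (\<lambda>i. if i = p then 1 else 2)) (selector_block p (selector_0_mod_4 p))"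
proof (rule is_core_selector_binary[OF \<open>p \<ge> 3\<close>])
  have "p \<ge> 4" "even p" using assms by presburger+
  show "selector_0_mod_4 p i k < (if k = p then 1 else 2)" for i k
    by (simp add: selector_0_mod_4_def)
  show "\<exists>i\<in>{1..p}. i \<noteq> k \<and> selector_0_mod_4 p i k = v"
    if "k \<in> {1..p}" "v < (if k = p then 1 else 2)" for k v
  proof -
    define i :: nat
      where "i = (if v = 1 then p else if k = p \<or> k = 2 then 1 else if k = 1 then 3 else 2)"
    have "i \<in> {1..p}" "i \<noteq> k" "selector_0_mod_4 p i k = v"
      using that \<open>p \<ge> 4\<close> \<open>even p\<close>
      by (auto simp: i_def selector_0_mod_4_def mod_2_eq_odd split: if_splits)
    then show ?thesis by blast
  qed
  show "odd (row_sum p (selector_0_mod_4 p) i + selector_0_mod_4 p i j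
           + row_sum p (selector_0_mod_4 p) j + selector_0_mod_4 p j i)"
    if "1 \<le> i" "i < j" "j \<le> p" for i j
    using that \<open>even p\<close> odd_row_sum_selector_0_mod_4[OF assms(2), of i]
      odd_row_sum_selector_0_mod_4[OF assms(2), of j]
    by (auto simp: selector_0_mod_4_def)
qed simp

definition selector_1_mod_4 :: "nat \<Rightarrow> nat \<Rightarrow> nat \<Rightarrow> nat" where
  "selector_1_mod_4 p i k = (if k = 1 \<or> k = p then 0 else (of_bool (k < i) + i * k + i) mod 2)"

lemma even_row_sum_selector_1_mod_4:
  assumes "p mod 4 = 1" "p \<ge> 3" "i \<in> {1..p}"
  shows "even (row_sum p (selector_1_mod_4 p) i) \<longleftrightarrow> i = 1 \<or> even i"
proof -
  have "odd p" using assms(1) by presburger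
  have Icc: "{1..p} = insert 1 (insert p {2..<p})" using assms by auto
  have "\<Sum>{1..p} = 1 + p + \<Sum>{2..<p}"
    unfolding Icc using assms by simp
  then have "odd (\<Sum>{2..<p})"
    using even_sum_Icc_iff[of p] assms(1) \<open>odd p\<close> by simp
  moreover have "(\<Sum>k\<in>{2..<p}. of_bool (k < i) + i * k + i) = (i - 2) + i * \<Sum>{2..<p} + i * (p - 2)"
  proof -
    have "{2..<p} \<inter> {k. k < i} = {2..<i}" using assms by auto
    then show ?thesis by (simp add: sum.distrib sum_distrib_left)
  qed
  moreover have "(\<Sum>k=1..p. selector_1_mod_4 p i k) = (\<Sum>k\<in>{2..<p}. (of_bool (k < i) + i * k + i) mod 2)"
    unfolding Icc using assms by (simp add: selector_1_mod_4_def)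
  moreover have "odd (p - 2)" using \<open>odd p\<close> \<open>p \<ge> 3\<close> by presburger
  ultimately have "even (\<Sum>k=1..p. selector_1_mod_4 p i k) \<longleftrightarrow> i = 1 \<or> even i"
    using assms even_sum_mod_2[of "\<lambda>k. of_bool (k < i) + i * k + i" "{2..<p}"]
    by (cases "i = 1") auto
  moreover have "selector_1_mod_4 p i i = 0"
    by (simp add: selector_1_mod_4_def mod_2_eq_odd)
  ultimately show ?thesis
    using assms by (simp add: even_row_sum_iff)
qed

lemma is_core_selector_1_mod_4:
  assumes "p \<ge> 3" "p mod 4 = 1"
  shows "is_core p (\<lambda>i. if i = 1 \<or> i = p then 1 else 2)
           (selector_class (\<lambda>i. if i = 1 \<or> i = p then 1 else 2)) (selector_block p (selector_1_mod_4 p))"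
proof (rule is_core_selector_binary[OF \<open>p \<ge> 3\<close>])
  have "p \<ge> 5" "odd p" using assms by presburger+
  show "selector_1_mod_4 p i k < (if k = 1 \<or> k = p then 1 else 2)" for i k
    by (simp add: selector_1_mod_4_def)
  show "\<exists>i\<in>{1..p}. i \<noteq> k \<and> selector_1_mod_4 p i k = v"
    if "k \<in> {1..p}" "v < (if k = 1 \<or> k = p then 1 else 2)" for k v
  proof -
    define i :: nat
      where "i = (if k = 1 \<or> k = p then 2 else if odd (v + k) then 1 else p)"
    have "i \<in> {1..p}" "i \<noteq> k" "selector_1_mod_4 p i k = v"
      using that \<open>p \<ge> 5\<close> \<open>odd p\<close> less_2_cases[of v]
      by (auto simp: i_def selector_1_mod_4_def mod_2_eq_odd split: if_splits)
    then show ?thesis by blast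
  qed
  show "odd (row_sum p (selector_1_mod_4 p) i + selector_1_mod_4 p i j
           + row_sum p (selector_1_mod_4 p) j + selector_1_mod_4 p j i)"
    if "1 \<le> i" "i < j" "j \<le> p" for i j
    using that \<open>odd p\<close> even_row_sum_selector_1_mod_4[OF assms(2,1), of i]
      even_row_sum_selector_1_mod_4[OF assms(2,1), of j]
    by (auto simp: selector_1_mod_4_def mod_2_eq_odd)
qed simp

definition selector_2_mod_4 :: "nat \<Rightarrow> nat \<Rightarrow> nat" where
  "selector_2_mod_4 i k =
     (if i = 1 then if k = 3 then 2 else 1
      else if i = 2 then of_bool (k \<noteq> 1)
      else if odd i then of_bool (k = 1 \<or> i < k)
      else of_bool (k < i))"

lemma row_sum_selector_2_mod_4:
  assumes "p \<ge> 3" "i \<in> {1..p}"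
  shows "row_sum p selector_2_mod_4 i
    = (if i = 1 then p else if i = 2 then p - 2 else if odd i then p - i + 1 else i - 1)"
proof -
  consider "i = 1" | "i = 2" | "i \<ge> 3" "odd i" | "i \<ge> 3" "even i"
    using assms by fastforce
  then show ?thesis
  proof cases
    case 1
    have "row_sum p selector_2_mod_4 i = (\<Sum>k\<in>{1..p} - {1}. 1 + of_bool (k = 3))"
      unfolding row_sum_def 1 by (intro sum.cong) (auto simp: selector_2_mod_4_def)
    also have "\<dots> = card ({1..p} - {1}) + card (({1..p} - {1}) \<inter> {k. k = 3})"
      unfolding sum.distrib by simp
    also have "({1..p} - {1}) \<inter> {k. k = 3} = {3}" using assms by auto
    finally show ?thesis
      using assms 1 by simp
  next
    case 2
    have "({1..p} - {2}) \<inter> {k. k \<noteq> 1} = {3..p}" by auto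
    then show ?thesis
      using 2 by (simp add: row_sum_def selector_2_mod_4_def)
  next
    case 3
    have "({1..p} - {i}) \<inter> {k. k = 1 \<or> i < k} = insert 1 {i<..p}" using 3 assms by auto
    then show ?thesis
      using 3 assms by (simp add: row_sum_def selector_2_mod_4_def del: of_bool_or_iff)
  next
    case 4
    have "({1..p} - {i}) \<inter> {k. k < i} = {1..<i}" using 4 assms by auto
    then show ?thesis
      using 4 by (simp add: row_sum_def selector_2_mod_4_def)
  qed
qed

lemma clashes_selector_2_mod_4:
  assumes "1 \<le> i" "i < j"
  shows "clashes p selector_2_mod_4 i j = of_bool (i = 1 \<and> odd j \<and> 5 \<le> j \<and> 3 \<le> p)"
proof -
  have "{k \<in> {1..p} - {i, j}. {selector_2_mod_4 i k, selector_2_mod_4 j k} = {0, 2}}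
      = (if i = 1 \<and> odd j \<and> 5 \<le> j \<and> 3 \<le> p then {3} else {})"
    using assms by (auto simp: selector_2_mod_4_def doubleton_eq_iff) presburger
  then show ?thesis by (simp add: clashes_def)
qed

lemma is_core_selector_2_mod_4:
  assumes "p \<ge> 3" "p mod 4 = 2"
  shows "is_core p (\<lambda>i. if i = 3 then 3 else 2)
           (selector_class (\<lambda>i. if i = 3 then 3 else 2)) (selector_block p selector_2_mod_4)"
proof (rule is_core_selector_parity[OF \<open>p \<ge> 3\<close>])
  have "p \<ge> 6" "even p" using assms by presburger+
  show "selector_2_mod_4 i k < (if k = 3 then 3 else 2)" if "i \<in> {1..p}" "k \<noteq> i" for i k
    using that by (auto simp: selector_2_mod_4_def)
  show "\<exists>i\<in>{1..p}. i \<noteq> k \<and> selector_2_mod_4 i k = v"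
    if "k \<in> {1..p}" "v < (if k = 3 then 3 else 2)" for k v
  proof -
    define i :: nat where "i = (if v = 2 then 1
      else if v = 1 then if k = 1 then 3 else if k = 3 then 2 else 1
      else if k = 1 then 2 else if k = 2 then 3 else if k \<in> {3, 4} then 5 else 4)"
    have "v = 0 \<or> v = 1 \<or> v = 2" using that by (auto split: if_splits)
    then have "i \<in> {1..p}" "i \<noteq> k" "selector_2_mod_4 i k = v"
      using that \<open>p \<ge> 6\<close> by (auto simp: i_def selector_2_mod_4_def)
    then show ?thesis by blast
  qed
  show "odd (row_sum p selector_2_mod_4 i + selector_2_mod_4 i j + row_sum p selector_2_mod_4 j
           + selector_2_mod_4 j i + clashes p selector_2_mod_4 i j)"
    if "1 \<le> i" "i < j" "j \<le> p" for i j
    using that \<open>even p\<close> \<open>p \<ge> 6\<close>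
    by (auto simp: row_sum_selector_2_mod_4 clashes_selector_2_mod_4 selector_2_mod_4_def)
      presburger
qed simp

lemma exists_small_core:
  assumes "l \<ge> 3" "is_core l x C B"
    and bounds: "\<And>i. i \<in> {1..l} \<Longrightarrow> 1 \<le> x i \<and> x i \<le> 2 + of_bool (i = 3)"
  shows "\<exists>x C B. is_core l x C B \<and> (\<Sum>i=1..l. x i) \<le> 2 * l + 1 \<and>
           (\<forall>i\<in>{1..l}. 1 \<le> x i \<and> x i \<le> 3)"
proof -
  have "(\<Sum>i=1..l. x i) \<le> (\<Sum>i=1..l. 2 + of_bool (i = 3))"
    using bounds by (intro sum_mono) blast
  also have "\<dots> = 2 * l + card ({1..l} \<inter> {i. i = 3})"
    unfolding sum.distrib by simp
  also have "{1..l} \<inter> {i. i = 3} = {3}"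
    using assms(1) by auto
  finally have "(\<Sum>i=1..l. x i) \<le> 2 * l + 1" by simp
  moreover have "1 \<le> x i \<and> x i \<le> 3" if "i \<in> {1..l}" for i
    using bounds[OF that] by (cases "i = 3") auto
  ultimately show ?thesis
    using assms(2) by blast
qed

theorem mainTheorem10:
  fixes l :: nat
  assumes "l \<ge> 3"
  shows "(\<exists>x C B. is_core l x C B \<and> (\<Sum>i=1..l. x i) \<le> 2 * l + 1 \<and>
            (\<forall>i\<in>{1..l}. 1 \<le> x i \<and> x i \<le> 3))
    \<and> (l mod 4 = 1 \<longrightarrow> (\<exists>C B. is_core l (\<lambda>i. if i = 1 \<or> i = l then 1 else 2) C B))
    \<and> (l mod 4 = 0 \<longrightarrow> (\<exists>C B. is_core l (\<lambda>i. if i = l then 1 else 2) C B))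
    \<and> (l mod 4 = 3 \<longrightarrow> (\<exists>C B. is_core l (\<lambda>i. 2) C B))
    \<and> (l mod 4 = 2 \<longrightarrow> (\<exists>C B. is_core l (\<lambda>i. if i = 3 then 3 else 2) C B))"
proof -
  consider "l mod 4 = 0" | "l mod 4 = 1" | "l mod 4 = 2" | "l mod 4 = 3" by linarith
  then show ?thesis
  proof cases
    case 1
    note core = is_core_selector_0_mod_4[OF assms 1]
    show ?thesis using exists_small_core[OF assms core] core 1 by fastforce
  next
    case 2
    note core = is_core_selector_1_mod_4[OF assms 2]
    show ?thesis using exists_small_core[OF assms core] core 2 by fastforce
  next
    case 3
    note core = is_core_selector_2_mod_4[OF assms 3]
    show ?thesis using exists_small_core[OF assms core] core 3 by fastforce
  next
    case 4
    then have "odd l" by presburger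
    note core = is_core_selector_odd[OF assms this]
    show ?thesis using exists_small_core[OF assms core] core 4 by fastforce
  qed
qed

end
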